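(* Let $m\in\mathbb N$ with $m\ge 12$ and $i,j\in\{1,2\}$. Then $r(T_m^i,T_{m+1}^j)=r(T_m^*,T_{m+1}^j)=2m-5$.
   Context: All graphs are finite and simple; a graph "contains" $H$ if it has a subgraph isomorphic to $H$. For graphs $G_1,G_2$, the Ramsey number $r(G_1,G_2)$ is the smallest positive integer $N$ such that for every graph $G$ on $N$ vertices, either $G$ contains a copy of $G_1$ or the complement $\overline G$ contains a copy of $G_2$. For $n\ge 5$, $T_n^1$ is the tree with vertex set $\{v_0,\ldots,v_{n-1}\}$ and edges $v_0v_1,\ldots,v_0v_{n-3},v_{n-4}v_{n-2},v_{n-3}v_{n-1}$, and $T_n^2$ is the tree on the same vertex set with edges $v_0v_1,\ldots,v_0v_{n-3},v_{n-3}v_{n-2},v_{n-3}v_{n-1}$. For $n\ge 4$, $T_n^*$ is the tree on $\{v_0,\ldots,v_{n-1}\}$ with edges $v_0v_1,\ldots,v_0v_{n-3},v_{n-3}v_{n-2},v_{n-2}v_{n-1}$. *)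

theory Defs
  imports Main
begin

definition pairs :: "nat \<Rightarrow> nat set set" where
  "pairs N = {e. e \<subseteq> {0..<N} \<and> card e = 2}"

definition is_graph :: "nat \<Rightarrow> nat set set \<Rightarrow> bool" where
  "is_graph N E \<longleftrightarrow> E \<subseteq> pairs N"

definition compl_graph :: "nat \<Rightarrow> nat set set \<Rightarrow> nat set set" where
  "compl_graph N E = pairs N - E"

definition contains :: "nat \<Rightarrow> nat set set \<Rightarrow> nat \<Rightarrow> nat set set \<Rightarrow> bool" where
  "contains N E n H \<longleftrightarrow>
     (\<exists>f. inj_on f {0..<n} \<and> f ` {0..<n} \<subseteq> {0..<N} \<and> (\<forall>e\<in>H. f ` e \<in> E))"

definition ramsey :: "nat \<Rightarrow> nat set set \<Rightarrow> nat \<Rightarrow> nat set set \<Rightarrow> nat" where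
  "ramsey n1 H1 n2 H2 = (LEAST N. N \<ge> 1 \<and>
     (\<forall>E. is_graph N E \<longrightarrow> contains N E n1 H1 \<or> contains N (compl_graph N E) n2 H2))"

text \<open>The trees T_n^1, T_n^2, T_n^* on vertex set \{0..<n\} (vertex v_k is k).\<close>
definition T1 :: "nat \<Rightarrow> nat set set" where
  "T1 n = {{0, k} | k. 1 \<le> k \<and> k \<le> n - 3} \<union> {{n - 4, n - 2}, {n - 3, n - 1}}"

definition T2 :: "nat \<Rightarrow> nat set set" where
  "T2 n = {{0, k} | k. 1 \<le> k \<and> k \<le> n - 3} \<union> {{n - 3, n - 2}, {n - 3, n - 1}}"

definition Tstar :: "nat \<Rightarrow> nat set set" where
  "Tstar n = {{0, k} | k. 1 \<le> k \<and> k \<le> n - 3} \<union> {{n - 3, n - 2}, {n - 2, n - 1}}"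

definition Ti :: "nat \<Rightarrow> nat \<Rightarrow> nat set set" where
  "Ti i n = (if i = 1 then T1 n else T2 n)"

end

theory Submission
  imports Defs
begin

text \<open>
  Each of these trees consists of a star with centre 0 and n - 3 leaves together with two
  further vertices hanging off the leaves (or off each other).  Hence a tree is found around
  a vertex c as soon as c has about n - 1 neighbours and two suitably placed "pendant"
  vertices; every pendant vertex that is not itself a neighbour of c saves one unit of degree.

  Lower bound: two disjoint cliques of sizes m - 3 and at most m - 3 have red degrees below
  m - 3 and blue degrees at most m - 3, whereas the trees need a centre of degree m - 3 resp.
  m - 2 (centre_degree, two_cliques_degrees).

  Upper bound: in a red/blue colouring of K_(2m-5), every vertex has red plus blue degree
  2m - 6.  Assuming that some red T_m (of any of the three kinds) and some blue T_{m+1} (of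
  either kind) are missing, the locale tree_free_colouring squeezes the degrees step by step
  (blue <= m-1, red <= m-2, blue <= m-2, red <= m-3, blue <= m-3), so the colouring is
  (m-3)-regular in both colours; then all three red trees are built explicitly, a
  contradiction.
\<close>

definition nbr :: "nat \<Rightarrow> nat set set \<Rightarrow> nat \<Rightarrow> nat set" where
  "nbr N F v = {u. u < N \<and> u \<noteq> v \<and> {v, u} \<in> F}"

lemma nbr_lt: "u \<in> nbr N F v \<Longrightarrow> u < N"
  and nbr_ne: "u \<in> nbr N F v \<Longrightarrow> u \<noteq> v"
  and nbr_edge: "u \<in> nbr N F v \<Longrightarrow> {v, u} \<in> F"
  unfolding nbr_def by auto

lemma nbr_sym: "u \<in> nbr N F v \<Longrightarrow> v < N \<Longrightarrow> v \<in> nbr N F u"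
  unfolding nbr_def by (auto simp: insert_commute)

lemma nbr_subset: "nbr N F v \<subseteq> {0..<N}"
  unfolding nbr_def by auto

lemma finite_nbr [simp]: "finite (nbr N F v)"
  using finite_subset[OF nbr_subset] by blast

lemma obtain_fresh:
  assumes "length xs < card A"
  obtains x where "x \<in> A" "x \<notin> set xs"
proof -
  have "\<not> A \<subseteq> set xs"
    using card_mono[of "set xs" A] card_length[of xs] assms by auto
  then show ?thesis using that by blast
qed

lemma extend_injection:
  assumes D: "finite D" "S \<subseteq> D" and g: "inj_on g S" "g ` S \<inter> L = {}"
    and room: "card (D - S) \<le> card L"
  obtains f where "inj_on f D" "\<And>k. k \<in> S \<Longrightarrow> f k = g k" "f ` (D - S) \<subseteq> L"
proof -
  obtain L' where L': "L' \<subseteq> L" "card L' = card (D - S)" "finite L'"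
    using obtain_subset_with_card_n[OF room] by blast
  obtain h where h: "bij_betw h (D - S) L'"
    using finite_same_card_bij[OF _ L'(3) L'(2)[symmetric]] D(1) by blast
  define f where "f k = (if k \<in> S then g k else h k)" for k
  have "h ` (D - S) = L'" using h by (simp add: bij_betw_def)
  then have "inj_on f (S \<union> (D - S))"
    unfolding f_def using inj_on_disjoint_Un[OF g(1) bij_betw_imp_inj_on[OF h]] L'(1) g(2) by blast
  moreover have "S \<union> (D - S) = D" using D(2) by blast
  moreover have "f ` (D - S) \<subseteq> L" using \<open>h ` (D - S) = L'\<close> L'(1) by (auto simp: f_def)
  moreover have "f k = g k" if "k \<in> S" for k using that by (simp add: f_def)
  ultimately show ?thesis by (intro that) simp_all
qed

text \<open>Embedding principle: fix images of a set S of special vertices (with 0 mapped to the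
  centre c); if c has enough further neighbours, every remaining vertex of H can be mapped to a
  fresh neighbour of c, provided each edge of H lies inside S or joins 0 to a non-special vertex.\<close>

lemma star_extension:
  assumes S: "S \<subseteq> {0..<n}" "0 \<in> S"
    and g: "inj_on g S" "g ` S \<subseteq> {0..<N}" "g 0 = c"
    and room: "n \<le> card (g ` S \<union> nbr N F c)"
    and edges: "\<And>e. e \<in> H \<Longrightarrow> (e \<subseteq> S \<and> g ` e \<in> F) \<or> (\<exists>k \<in> {0..<n} - S. e = {0, k})"
  shows "contains N F n H"
proof -
  define L where "L = nbr N F c - g ` S"
  have "finite S" using S(1) finite_subset by blast
  have "g ` S \<union> nbr N F c = g ` S \<union> L" unfolding L_def by blast
  moreover have "card (g ` S \<union> L) = card S + card L"
    using card_image[OF g(1)] \<open>finite S\<close> by (subst card_Un_disjoint) (auto simp: L_def)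
  ultimately have "card ({0..<n} - S) \<le> card L"
    using room S(1) \<open>finite S\<close> by (simp add: card_Diff_subset)
  moreover have "g ` S \<inter> L = {}" unfolding L_def by blast
  ultimately obtain f where f: "inj_on f {0..<n}" "\<And>k. k \<in> S \<Longrightarrow> f k = g k"
    and leaves: "f ` ({0..<n} - S) \<subseteq> L"
    using extend_injection[OF finite_atLeastLessThan S(1) g(1)] by metis
  have "f ` {0..<n} \<subseteq> {0..<N}"
  proof
    fix u assume "u \<in> f ` {0..<n}"
    then obtain k where k: "k < n" "u = f k" by auto
    show "u \<in> {0..<N}"
    proof (cases "k \<in> S")
      case True
      then show ?thesis using f(2) g(2) k(2) by auto
    next
      case False
      then have "f k \<in> L" using leaves k(1) by auto
      then show ?thesis using nbr_subset[of N F c] k(2) unfolding L_def by auto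
    qed
  qed
  moreover have "f ` e \<in> F" if e: "e \<in> H" for e
  proof -
    consider "e \<subseteq> S" "g ` e \<in> F" | k where "k \<in> {0..<n} - S" "e = {0, k}"
      using edges[OF e] by blast
    then show ?thesis
    proof cases
      case 1
      have "f ` e = g ` e" using 1(1) f(2) by (intro image_cong) auto
      then show ?thesis using 1(2) by simp
    next
      case 2
      have "f k \<in> nbr N F c" using leaves 2(1) unfolding L_def by blast
      moreover have "f 0 = c" using S(2) g(3) f(2) by simp
      ultimately show ?thesis using 2(2) nbr_edge by fastforce
    qed
  qed
  ultimately show ?thesis using f(1) unfolding contains_def by blast
qed

lemma tree_extension:
  assumes H: "H = {{0, k} | k. 1 \<le> k \<and> k \<le> n - 3} \<union> X"
    and S: "S \<subseteq> {0..<n}" "0 \<in> S"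
    and g: "inj_on g S" "g ` S \<subseteq> {0..<N}" "g 0 = c"
    and leaves: "\<And>k. k \<in> S \<Longrightarrow> 1 \<le> k \<Longrightarrow> k \<le> n - 3 \<Longrightarrow> g k \<in> nbr N F c"
    and extra: "\<And>e. e \<in> X \<Longrightarrow> e \<subseteq> S \<and> g ` e \<in> F"
    and room: "n \<le> card (g ` S \<union> nbr N F c)"
  shows "contains N F n H"
proof (rule star_extension[OF S g room])
  fix e assume "e \<in> H"
  then consider "e \<in> X" | k where "e = {0, k}" "1 \<le> k" "k \<le> n - 3"
    unfolding H by blast
  then show "(e \<subseteq> S \<and> g ` e \<in> F) \<or> (\<exists>k \<in> {0..<n} - S. e = {0, k})"
  proof cases
    case 1
    then show ?thesis using extra by blast
  next
    case (2 k)
    show ?thesis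
    proof (cases "k \<in> S")
      case True
      then have "g ` e = {c, g k}" using 2(1) g(3) by simp
      then show ?thesis using nbr_edge[OF leaves[OF True 2(2,3)]] 2(1) S(2) True by simp
    next
      case False
      then show ?thesis using 2 by auto
    qed
  qed
qed

text \<open>Counting the vertices available for an embedding centred at c.\<close>

lemma card_room:
  assumes "c \<notin> A" "c \<notin> Q" "finite A" "finite Q" "P \<subseteq> A"
  shows "card (insert c (P \<union> Q) \<union> A) = Suc (card A + card (Q - A))"
proof -
  have "insert c (P \<union> Q) \<union> A = insert c (A \<union> (Q - A))" using assms(5) by blast
  moreover have "card (A \<union> (Q - A)) = card A + card (Q - A)"
    using assms(3,4) by (intro card_Un_disjoint) auto
  ultimately show ?thesis using assms(1-4) by simp
qed

text \<open>T_n^2 around c: a neighbour a of c with two further neighbours x, y.  Each of x, y that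
  is not adjacent to c lowers the required degree of c by one.\<close>

lemma T2_embedding:
  assumes n: "5 \<le> n" and c: "c < N" and a: "a \<in> nbr N F c"
    and x: "x \<in> nbr N F a" and y: "y \<in> nbr N F a" and "x \<noteq> c" "y \<noteq> c" "x \<noteq> y"
    and room: "n - 1 \<le> card (nbr N F c) + card ({x, y} - nbr N F c)"
  shows "contains N F n (T2 n)"
proof -
  obtain p where p: "n = p + 5" using n by (metis add.commute le_Suc_ex)
  define S where "S = {0, p + 2, p + 3, p + 4}"
  define g where "g k = (if k = 0 then c else if k = p + 2 then a else if k = p + 3 then x else y)" for k
  have gS: "g ` S = {c, a, x, y}" using p by (auto simp: S_def g_def)
  have "c \<noteq> a" "a \<noteq> x" "a \<noteq> y" using a x y nbr_ne by metis+
  then have "card (g ` S) = card S" unfolding gS using p assms(6-8) by (auto simp: S_def card_insert_if)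
  then have inj: "inj_on g S" by (rule eq_card_imp_inj_on[rotated]) (simp add: S_def)
  have "card (g ` S \<union> nbr N F c) = Suc (card (nbr N F c) + card ({x, y} - nbr N F c))"
    using card_room[of c "nbr N F c" "{x, y}" "{a}"] a assms(6,7) nbr_ne unfolding gS
    by (auto simp: insert_commute)
  then have room': "n \<le> card (g ` S \<union> nbr N F c)" using room n by linarith
  have range: "g ` S \<subseteq> {0..<N}" unfolding gS using c a x y nbr_lt by auto
  have leaves: "g k \<in> nbr N F c" if "k \<in> S" "1 \<le> k" "k \<le> n - 3" for k
    using that a p by (auto simp: S_def g_def)
  have extra: "e \<subseteq> S \<and> g ` e \<in> F" if "e \<in> {{p + 2, p + 3}, {p + 2, p + 4}}" for e
    using that p nbr_edge[OF x] nbr_edge[OF y] by (auto simp: S_def g_def insert_commute)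
  have S: "S \<subseteq> {0..<n}" "0 \<in> S" and g0: "g 0 = c" using p by (auto simp: S_def g_def)
  have "T2 n = {{0, k} | k. 1 \<le> k \<and> k \<le> n - 3} \<union> {{p + 2, p + 3}, {p + 2, p + 4}}"
    by (auto simp: T2_def p)
  from tree_extension[OF this S inj range g0 leaves extra room'] show ?thesis .
qed

lemma Tstar_embedding:
  assumes n: "5 \<le> n" and c: "c < N" and a: "a \<in> nbr N F c"
    and x: "x \<in> nbr N F a" and y: "y \<in> nbr N F x" and "x \<noteq> c" "y \<noteq> c" "y \<noteq> a"
    and room: "n - 1 \<le> card (nbr N F c) + card ({x, y} - nbr N F c)"
  shows "contains N F n (Tstar n)"
proof -
  obtain p where p: "n = p + 5" using n by (metis add.commute le_Suc_ex)
  define S where "S = {0, p + 2, p + 3, p + 4}"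
  define g where "g k = (if k = 0 then c else if k = p + 2 then a else if k = p + 3 then x else y)" for k
  have gS: "g ` S = {c, a, x, y}" using p by (auto simp: S_def g_def)
  have "c \<noteq> a" "a \<noteq> x" "x \<noteq> y" using a x y nbr_ne by metis+
  then have "card (g ` S) = card S" unfolding gS using p assms(6-8) by (auto simp: S_def card_insert_if)
  then have inj: "inj_on g S" by (rule eq_card_imp_inj_on[rotated]) (simp add: S_def)
  have "card (g ` S \<union> nbr N F c) = Suc (card (nbr N F c) + card ({x, y} - nbr N F c))"
    using card_room[of c "nbr N F c" "{x, y}" "{a}"] a assms(6,7) nbr_ne unfolding gS
    by (auto simp: insert_commute)
  then have room': "n \<le> card (g ` S \<union> nbr N F c)" using room n by linarith
  have range: "g ` S \<subseteq> {0..<N}" unfolding gS using c a x y nbr_lt by auto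
  have leaves: "g k \<in> nbr N F c" if "k \<in> S" "1 \<le> k" "k \<le> n - 3" for k
    using that a p by (auto simp: S_def g_def)
  have extra: "e \<subseteq> S \<and> g ` e \<in> F" if "e \<in> {{p + 2, p + 3}, {p + 3, p + 4}}" for e
    using that p nbr_edge[OF x] nbr_edge[OF y] by (auto simp: S_def g_def insert_commute)
  have S: "S \<subseteq> {0..<n}" "0 \<in> S" and g0: "g 0 = c" using p by (auto simp: S_def g_def)
  have "Tstar n = {{0, k} | k. 1 \<le> k \<and> k \<le> n - 3} \<union> {{p + 2, p + 3}, {p + 3, p + 4}}"
    by (auto simp: Tstar_def p)
  from tree_extension[OF this S inj range g0 leaves extra room'] show ?thesis .
qed

lemma T1_embedding:
  assumes n: "5 \<le> n" and c: "c < N" and a: "a \<in> nbr N F c" and b: "b \<in> nbr N F c"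
    and x: "x \<in> nbr N F a" and y: "y \<in> nbr N F b"
    and "a \<noteq> b" "x \<noteq> c" "x \<noteq> b" "y \<noteq> c" "y \<noteq> a" "y \<noteq> x"
    and room: "n - 1 \<le> card (nbr N F c) + card ({x, y} - nbr N F c)"
  shows "contains N F n (T1 n)"
proof -
  obtain p where p: "n = p + 5" using n by (metis add.commute le_Suc_ex)
  define S where "S = {0, p + 1, p + 2, p + 3, p + 4}"
  define g where "g k = (if k = 0 then c else if k = p + 1 then a else if k = p + 2 then b
    else if k = p + 3 then x else y)" for k
  have gS: "g ` S = {c, a, b, x, y}" using p by (auto simp: S_def g_def)
  have "c \<noteq> a" "c \<noteq> b" "a \<noteq> x" "b \<noteq> y" using a b x y nbr_ne by metis+
  then have "card (g ` S) = card S"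
    unfolding gS using p assms(7-12) by (auto simp: S_def card_insert_if)
  then have inj: "inj_on g S" by (rule eq_card_imp_inj_on[rotated]) (simp add: S_def)
  have "card (g ` S \<union> nbr N F c) = Suc (card (nbr N F c) + card ({x, y} - nbr N F c))"
    using card_room[of c "nbr N F c" "{x, y}" "{a, b}"] a b assms(8,10) nbr_ne unfolding gS
    by (auto simp: insert_commute)
  then have room': "n \<le> card (g ` S \<union> nbr N F c)" using room n by linarith
  have range: "g ` S \<subseteq> {0..<N}" unfolding gS using c a b x y nbr_lt by auto
  have leaves: "g k \<in> nbr N F c" if "k \<in> S" "1 \<le> k" "k \<le> n - 3" for k
    using that a b p by (auto simp: S_def g_def)
  have extra: "e \<subseteq> S \<and> g ` e \<in> F" if "e \<in> {{p + 1, p + 3}, {p + 2, p + 4}}" for e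
    using that p nbr_edge[OF x] nbr_edge[OF y] by (auto simp: S_def g_def insert_commute)
  have S: "S \<subseteq> {0..<n}" "0 \<in> S" and g0: "g 0 = c" using p by (auto simp: S_def g_def)
  have "T1 n = {{0, k} | k. 1 \<le> k \<and> k \<le> n - 3} \<union> {{p + 1, p + 3}, {p + 2, p + 4}}"
    by (auto simp: T1_def p)
  from tree_extension[OF this S inj range g0 leaves extra room'] show ?thesis .
qed

lemma card_outside_pair: "x \<notin> A \<Longrightarrow> y \<notin> A \<Longrightarrow> x \<noteq> y \<Longrightarrow> card ({x, y} - A) = 2"
  by (simp add: insert_Diff_if)

lemma heavy_pair_trees:
  assumes n: "5 \<le> n" and c: "c < N" and deg: "n - 1 \<le> card (nbr N F c)"
    and a: "a \<in> nbr N F c" and b: "b \<in> nbr N F c" and "a \<noteq> b"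
    and heavy_a: "4 \<le> card (nbr N F a)" and heavy_b: "4 \<le> card (nbr N F b)"
  shows "contains N F n (T1 n) \<and> contains N F n (T2 n)"
proof
  have room: "n - 1 \<le> card (nbr N F c) + card ({x, y} - nbr N F c)" for x y
    using deg by linarith
  obtain x where x: "x \<in> nbr N F a" "x \<notin> set [c, b]"
    using obtain_fresh[of "[c, b]" "nbr N F a"] heavy_a by auto
  obtain y where y: "y \<in> nbr N F b" "y \<notin> set [c, a, x]"
    using obtain_fresh[of "[c, a, x]" "nbr N F b"] heavy_b by auto
  show "contains N F n (T1 n)"
    using T1_embedding[OF n c a b x(1) y(1) \<open>a \<noteq> b\<close> _ _ _ _ _ room] x(2) y(2) by simp
next
  have room: "n - 1 \<le> card (nbr N F c) + card ({x, y} - nbr N F c)" for x y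
    using deg by linarith
  obtain x where x: "x \<in> nbr N F a" "x \<notin> set [c]"
    using obtain_fresh[of "[c]" "nbr N F a"] heavy_a by auto
  obtain y where y: "y \<in> nbr N F a" "y \<notin> set [c, x]"
    using obtain_fresh[of "[c, x]" "nbr N F a"] heavy_a by auto
  show "contains N F n (T2 n)"
    using T2_embedding[OF n c a x(1) y(1) _ _ _ room] x(2) y(2) by simp
qed

lemma heavy_path_Tstar:
  assumes n: "5 \<le> n" and c: "c < N" and deg: "n - 1 \<le> card (nbr N F c)"
    and a: "a \<in> nbr N F c" and x: "x \<in> nbr N F a" and "x \<noteq> c"
    and heavy_x: "4 \<le> card (nbr N F x)"
  shows "contains N F n (Tstar n)"
proof -
  have room: "n - 1 \<le> card (nbr N F c) + card ({x, y} - nbr N F c)" for y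
    using deg by linarith
  obtain y where y: "y \<in> nbr N F x" "y \<notin> set [c, a]"
    using obtain_fresh[of "[c, a]" "nbr N F x"] heavy_x by auto
  show ?thesis
    using Tstar_embedding[OF n c a x y(1) \<open>x \<noteq> c\<close> _ _ room] y(2) by simp
qed

lemma dense_set_trees:
  assumes n: "5 \<le> n" and c: "c < N" and deg: "n - 1 \<le> card (nbr N F c)"
    and "c \<in> X" and dense: "\<And>v. v \<in> X \<Longrightarrow> 4 \<le> card (nbr N F v \<inter> X)"
  shows "contains N F n (T1 n) \<and> contains N F n (T2 n) \<and> contains N F n (Tstar n)"
proof -
  have heavy: "4 \<le> card (nbr N F v)" if "v \<in> X" for v
    using dense[OF that] card_mono[of "nbr N F v" "nbr N F v \<inter> X"] by simp
  have many: "length [a] < card (nbr N F c \<inter> X)" for a :: nat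
    using dense[OF \<open>c \<in> X\<close>] by simp
  obtain a where a: "a \<in> nbr N F c" "a \<in> X"
    using obtain_fresh[OF many] by blast
  obtain b where b: "b \<in> nbr N F c" "b \<in> X" "b \<noteq> a"
    using obtain_fresh[OF many[of a]] by auto
  obtain x where x: "x \<in> nbr N F a" "x \<in> X" "x \<noteq> c"
    using obtain_fresh[of "[c]" "nbr N F a \<inter> X"] dense[OF a(2)] by auto
  have "contains N F n (T1 n) \<and> contains N F n (T2 n)"
    using heavy_pair_trees[OF n c deg a(1) b(1) b(3)[symmetric] heavy heavy] a b by blast
  moreover have "contains N F n (Tstar n)"
    using heavy_path_Tstar[OF n c deg a(1) x(1) x(3) heavy[OF x(2)]] .
  ultimately show ?thesis by blast
qed

lemma trees_with_outside_vertex: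
  assumes n: "5 \<le> n" and c: "c < N" and deg: "n - 2 \<le> card (nbr N F c)"
    and a: "a \<in> nbr N F c" and w: "w \<in> nbr N F a" and "w \<noteq> c" and out: "w \<notin> nbr N F c"
    and heavy: "\<And>v. v < N \<Longrightarrow> 4 \<le> card (nbr N F v)"
  shows "contains N F n (T1 n) \<and> contains N F n (T2 n) \<and> contains N F n (Tstar n)"
proof -
  have room: "n - 1 \<le> card (nbr N F c) + card ({w, y} - nbr N F c)" for y
  proof -
    have "{w} \<subseteq> {w, y} - nbr N F c" using out by blast
    then have "1 \<le> card ({w, y} - nbr N F c)"
      using card_mono[of "{w, y} - nbr N F c" "{w}"] by simp
    then show ?thesis using deg by linarith
  qed
  have heavy_a: "4 \<le> card (nbr N F a)" and heavy_w: "4 \<le> card (nbr N F w)"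
    using heavy nbr_lt a w by blast+
  have "length [a] < card (nbr N F c)" using deg n by simp
  then obtain b where b: "b \<in> nbr N F c" "b \<noteq> a" by (rule obtain_fresh) auto
  have "w \<noteq> b" using b(1) out by blast
  obtain y1 where y1: "y1 \<in> nbr N F b" "y1 \<notin> set [c, a, w]"
    using obtain_fresh[of "[c, a, w]" "nbr N F b"] heavy[OF nbr_lt[OF b(1)]] by auto
  obtain y2 where y2: "y2 \<in> nbr N F a" "y2 \<notin> set [c, w]"
    using obtain_fresh[of "[c, w]" "nbr N F a"] heavy_a by auto
  obtain y3 where y3: "y3 \<in> nbr N F w" "y3 \<notin> set [c, a]"
    using obtain_fresh[of "[c, a]" "nbr N F w"] heavy_w by auto
  have "contains N F n (T1 n)"
    using T1_embedding[OF n c a b(1) w y1(1) b(2)[symmetric] \<open>w \<noteq> c\<close> \<open>w \<noteq> b\<close> _ _ _ room]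
      y1(2) by simp
  moreover have "contains N F n (T2 n)"
    using T2_embedding[OF n c a w y2(1) \<open>w \<noteq> c\<close> _ _ room] y2(2) by simp
  moreover have "contains N F n (Tstar n)"
    using Tstar_embedding[OF n c a w y3(1) \<open>w \<noteq> c\<close> _ _ room] y3(2) by simp
  ultimately show ?thesis by blast
qed

lemma star_edges_in_trees:
  assumes "1 \<le> k" "k \<le> n - 3"
  shows "{0, k} \<in> T1 n" "{0, k} \<in> T2 n" "{0, k} \<in> Tstar n"
  using assms unfolding T1_def T2_def Tstar_def by blast+

lemma centre_degree:
  assumes "contains N F n H" "d < n" and star: "\<And>k. 1 \<le> k \<Longrightarrow> k \<le> d \<Longrightarrow> {0, k} \<in> H"
  shows "\<exists>v<N. d \<le> card (nbr N F v)"
proof -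
  obtain f where inj: "inj_on f {0..<n}" and range: "f ` {0..<n} \<subseteq> {0..<N}"
    and edges: "\<forall>e\<in>H. f ` e \<in> F"
    using assms(1) unfolding contains_def by blast
  have "f ` {1..d} \<subseteq> nbr N F (f 0)"
  proof
    fix u assume "u \<in> f ` {1..d}"
    then obtain k where k: "1 \<le> k" "k \<le> d" "u = f k" by auto
    have "f k \<noteq> f 0" using inj k assms(2) by (auto dest: inj_onD)
    moreover have "f k < N" using range k assms(2) by (simp add: image_subset_iff)
    moreover have "{f 0, f k} \<in> F" using edges star[OF k(1,2)] by force
    ultimately show "u \<in> nbr N F (f 0)" unfolding nbr_def using k(3) by simp
  qed
  moreover have "card (f ` {1..d}) = d"
    using inj_on_subset[OF inj, of "{1..d}"] assms(2) by (simp add: card_image subset_iff)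
  moreover have "f 0 < N" using range assms(2) by (simp add: image_subset_iff)
  ultimately show ?thesis using card_mono[OF finite_nbr] by metis
qed

definition two_cliques :: "nat \<Rightarrow> nat \<Rightarrow> nat set set" where
  "two_cliques N k = {e \<in> pairs N. \<exists>u v. e = {u, v} \<and> (u < k \<longleftrightarrow> v < k)}"

lemma two_cliques_degrees:
  assumes "N \<le> 2 * k" "v < N"
  shows "card (nbr N (two_cliques N k) v) < k"
    and "card (nbr N (compl_graph N (two_cliques N k)) v) \<le> k"
proof -
  have same: "(u < k \<longleftrightarrow> v < k)" if u: "u \<in> nbr N (two_cliques N k) v" for u
  proof -
    obtain u' v' where "{v, u} = {u', v'}" "u' < k \<longleftrightarrow> v' < k"
      using nbr_edge[OF u] unfolding two_cliques_def by blast
    then show ?thesis by (auto simp: doubleton_eq_iff)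
  qed
  have other: "\<not> (u < k \<longleftrightarrow> v < k)" if "u \<in> nbr N (compl_graph N (two_cliques N k)) v" for u
    using nbr_edge[OF that] unfolding compl_graph_def two_cliques_def by blast
  have "nbr N (two_cliques N k) v \<subseteq> (if v < k then {0..<k} else {k..<N}) - {v}"
    using same nbr_lt nbr_ne by fastforce
  then have "card (nbr N (two_cliques N k) v) \<le> card ((if v < k then {0..<k} else {k..<N}) - {v})"
    by (intro card_mono) auto
  then show "card (nbr N (two_cliques N k) v) < k" using assms by (auto split: if_splits)
  have "nbr N (compl_graph N (two_cliques N k)) v \<subseteq> (if v < k then {k..<N} else {0..<k})"
    using other nbr_lt by fastforce
  then have "card (nbr N (compl_graph N (two_cliques N k)) v) \<le> card (if v < k then {k..<N} else {0..<k})"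
    by (intro card_mono) auto
  then show "card (nbr N (compl_graph N (two_cliques N k)) v) \<le> k" using assms by (auto split: if_splits)
qed

text \<open>G is the complement of F on {0..<N}, expressed through neighbourhoods; this is symmetric and
  lets every colouring argument be applied to both colours.\<close>

definition complementary :: "nat \<Rightarrow> nat set set \<Rightarrow> nat set set \<Rightarrow> bool" where
  "complementary N F G \<longleftrightarrow>
     (\<forall>v<N. \<forall>u. u \<in> nbr N G v \<longleftrightarrow> u < N \<and> u \<noteq> v \<and> u \<notin> nbr N F v)"

lemma complementary_compl_graph: "complementary N E (compl_graph N E)"
proof -
  have pair: "{v, u} \<in> pairs N" if "v < N" "u < N" "u \<noteq> v" for u v
    using that by (simp add: pairs_def card_insert_if)
  then show ?thesis unfolding complementary_def nbr_def compl_graph_def by auto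
qed

lemma complementary_sym:
  assumes "complementary N F G"
  shows "complementary N G F"
  unfolding complementary_def
proof (intro allI impI)
  fix v u assume "v < N"
  then have "u \<in> nbr N G v \<longleftrightarrow> u < N \<and> u \<noteq> v \<and> u \<notin> nbr N F v"
    using assms unfolding complementary_def by simp
  then show "u \<in> nbr N F v \<longleftrightarrow> u < N \<and> u \<noteq> v \<and> u \<notin> nbr N G v"
    using nbr_lt[of u N F v] nbr_ne[of u N F v] by blast
qed

lemma degree_sum:
  assumes G: "complementary N F G" and v: "v < N"
  shows "card (nbr N F v) + card (nbr N G v) = N - 1"
proof -
  have "nbr N F v \<union> nbr N G v = {0..<N} - {v}"
  proof
    show "nbr N F v \<union> nbr N G v \<subseteq> {0..<N} - {v}" using nbr_lt nbr_ne by fastforce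
    show "{0..<N} - {v} \<subseteq> nbr N F v \<union> nbr N G v" using G v unfolding complementary_def by auto
  qed
  moreover have "nbr N F v \<inter> nbr N G v = {}" using G v unfolding complementary_def by auto
  ultimately have "card ({0..<N} - {v}) = card (nbr N F v) + card (nbr N G v)"
    using card_Un_disjoint[OF finite_nbr finite_nbr] by metis
  then show ?thesis using v by simp
qed

text \<open>If w is an F-neighbour of c and the G-degree of w is at least the F-degree of c, then w and c
  have a common G-neighbour: the G-neighbours of w cannot all be F-neighbours of c.\<close>

lemma common_opposite_neighbour:
  assumes G: "complementary N F G" and c: "c < N" and w: "w \<in> nbr N F c"
    and le: "card (nbr N F c) \<le> card (nbr N G w)"
  obtains a where "a \<in> nbr N G w" "a \<in> nbr N G c"
proof -
  have wN: "w < N" using w nbr_lt by blast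
  have cw: "c \<in> nbr N F w" using nbr_sym[OF w c] .
  have Gw: "u \<in> nbr N G w \<longleftrightarrow> u < N \<and> u \<noteq> w \<and> u \<notin> nbr N F w" for u
    using G wN unfolding complementary_def by simp
  have Gc: "u \<in> nbr N G c \<longleftrightarrow> u < N \<and> u \<noteq> c \<and> u \<notin> nbr N F c" for u
    using G c unfolding complementary_def by simp
  have "\<not> nbr N G w \<subseteq> nbr N F c - {w}"
  proof
    assume "nbr N G w \<subseteq> nbr N F c - {w}"
    then have "card (nbr N G w) \<le> card (nbr N F c - {w})" by (intro card_mono) auto
    moreover have "0 < card (nbr N F c)" using w card_gt_0_iff by fastforce
    ultimately show False using le w by simp
  qed
  then obtain a where a: "a \<in> nbr N G w" "a \<notin> nbr N F c - {w}" by (auto simp: subset_iff)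
  then have "a \<notin> nbr N F c" using nbr_ne by blast
  moreover have "a \<noteq> c" using a(1) cw Gw by auto
  ultimately have "a \<in> nbr N G c" using a(1) Gc Gw by auto
  then show ?thesis using that a(1) by blast
qed

lemma colour_split:
  assumes G: "complementary N F G" and a: "a < N" and T: "T \<subseteq> {0..<N}" "a \<notin> T"
    and u: "u \<in> nbr N G a" "u \<notin> T"
  shows "card T + 1 \<le> card (nbr N F a \<inter> T) + card (nbr N G a)"
proof -
  have Ga: "x \<in> nbr N G a \<longleftrightarrow> x < N \<and> x \<noteq> a \<and> x \<notin> nbr N F a" for x
    using G a unfolding complementary_def by simp
  have "T \<subseteq> (nbr N F a \<inter> T) \<union> (nbr N G a - {u})"
    using T u(2) Ga by auto
  then have "card T \<le> card ((nbr N F a \<inter> T) \<union> (nbr N G a - {u}))"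
    by (intro card_mono) auto
  also have "\<dots> \<le> card (nbr N F a \<inter> T) + card (nbr N G a - {u})" by (rule card_Un_le)
  finally show ?thesis using u(1) card_gt_0_iff[of "nbr N G a"] by auto
qed

lemma double_counting:
  assumes "finite A" "finite B"
  shows "(\<Sum>a\<in>A. card {b\<in>B. R a b}) = (\<Sum>b\<in>B. card {a\<in>A. R a b})"
proof -
  have "(\<Sum>a\<in>A. card {b\<in>B. R a b}) = (\<Sum>a\<in>A. \<Sum>b\<in>B. if R a b then 1 else 0)"
    using assms(2) by (simp add: sum.inter_filter[symmetric])
  also have "\<dots> = (\<Sum>b\<in>B. \<Sum>a\<in>A. if R a b then 1 else 0)" by (rule sum.swap)
  also have "\<dots> = (\<Sum>b\<in>B. card {a\<in>A. R a b})"
    using assms(1) by (simp add: sum.inter_filter[symmetric])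
  finally show ?thesis .
qed

lemma pigeonhole_two:
  assumes "finite A" "finite B" and two: "\<And>a. a \<in> A \<Longrightarrow> 2 \<le> card {b\<in>B. R a b}"
    and "card B < 2 * card A"
  shows "\<exists>b\<in>B. 2 \<le> card {a\<in>A. R a b}"
proof (rule ccontr)
  assume "\<not> ?thesis"
  then have "card {a\<in>A. R a b} \<le> 1" if "b \<in> B" for b using that by force
  then have "(\<Sum>b\<in>B. card {a\<in>A. R a b}) \<le> (\<Sum>b\<in>B. 1)" by (rule sum_mono)
  moreover have "(\<Sum>a\<in>A. 2) \<le> (\<Sum>a\<in>A. card {b\<in>B. R a b})" using two by (rule sum_mono)
  moreover have "(\<Sum>b\<in>B. 1) = card B" "(\<Sum>a\<in>A. 2) = 2 * card A" by simp_all
  ultimately show False using double_counting[OF assms(1,2), of R] assms(4) by linarith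
qed

text \<open>If every b \<in> B has a partner in A, no a \<in> A has two partners, and |A| \<le> |B|, then the
  partner of each b is unique as well (the partner map is a bijection).\<close>

lemma unique_partner_converse:
  assumes "finite A" "card A \<le> card B"
    and some: "\<And>b. b \<in> B \<Longrightarrow> \<exists>a\<in>A. R a b"
    and unique: "\<And>a b b'. a \<in> A \<Longrightarrow> b \<in> B \<Longrightarrow> b' \<in> B \<Longrightarrow> R a b \<Longrightarrow> R a b' \<Longrightarrow> b = b'"
    and b: "b \<in> B" and a: "a \<in> A" "a' \<in> A" "R a b" "R a' b"
  shows "a = a'"
proof -
  define g where "g b = (SOME a. a \<in> A \<and> R a b)" for b
  have g: "g b \<in> A" "R (g b) b" if "b \<in> B" for b
    using someI_ex[OF some[OF that, unfolded Bex_def]] unfolding g_def by blast+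
  have "inj_on g B"
  proof (rule inj_onI)
    fix b b' assume "b \<in> B" "b' \<in> B" "g b = g b'"
    then show "b = b'" using unique[of "g b" b b'] g by metis
  qed
  then have "card A \<le> card (g ` B)" using assms(2) by (simp add: card_image)
  then have "g ` B = A" using card_seteq[OF \<open>finite A\<close>] g(1) by blast
  have partner: "g b' = x \<Longrightarrow> b' \<in> B \<Longrightarrow> x \<in> A \<Longrightarrow> R x b \<Longrightarrow> b' = b" for b' x
    using unique[of x b' b] g(2) b by blast
  obtain b1 b2 where "b1 \<in> B" "g b1 = a" "b2 \<in> B" "g b2 = a'"
    using \<open>g ` B = A\<close> a(1,2) by blast
  then show ?thesis using partner a by blast
qed

locale tree_free_colouring =
  fixes m N :: nat and R B :: "nat set set"
  assumes m_ge: "12 \<le> m" and N_eq: "N = 2 * m - 5"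
    and colouring: "complementary N R B"
    and no_red: "\<not> (contains N R m (T1 m) \<and> contains N R m (T2 m) \<and> contains N R m (Tstar m))"
    and no_blue: "\<not> (contains N B (m + 1) (T1 (m + 1)) \<and> contains N B (m + 1) (T2 (m + 1)))"
begin

abbreviation nR where "nR \<equiv> nbr N R"
abbreviation nB where "nB \<equiv> nbr N B"

lemma colouring': "complementary N B R"
  using colouring by (rule complementary_sym)

lemma blue_not_red: "v < N \<Longrightarrow> u \<in> nB v \<Longrightarrow> u \<notin> nR v"
  using colouring unfolding complementary_def by blast

lemma red_not_blue: "v < N \<Longrightarrow> u \<in> nR v \<Longrightarrow> u \<notin> nB v"
  using colouring' unfolding complementary_def by blast

lemma degrees: "v < N \<Longrightarrow> card (nR v) + card (nB v) = 2 * m - 6"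
  using degree_sum[OF colouring] N_eq by simp

text \<open>A vertex of blue degree at least m has at most one blue neighbour of blue degree at least 4,
  since two of them give both blue trees.\<close>

lemma few_heavy_blue_neighbours:
  assumes c: "c < N" and deg: "m \<le> card (nB c)"
  shows "card {a \<in> nB c. 4 \<le> card (nB a)} \<le> 1"
proof (rule ccontr)
  assume "\<not> ?thesis"
  then obtain a b where a: "a \<in> nB c" "4 \<le> card (nB a)" and b: "b \<in> nB c" "4 \<le> card (nB b)"
    and "a \<noteq> b"
    using card_le_Suc0_iff_eq[of "{a \<in> nB c. 4 \<le> card (nB a)}"] by auto
  have "5 \<le> m + 1" "m + 1 - 1 \<le> card (nB c)" using m_ge deg by simp_all
  then show False
    using heavy_pair_trees[OF _ c _ a(1) b(1) \<open>a \<noteq> b\<close> a(2) b(2)] no_blue by blast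
qed

text \<open>Otherwise the blue neighbours of c of small blue degree form a set S that is dense in red,
  and a vertex of S is the centre of all three red trees.\<close>

lemma blue_degree_le_m_minus_1:
  assumes c: "c < N"
  shows "card (nB c) \<le> m - 1"
proof (rule ccontr)
  assume "\<not> ?thesis"
  then have deg: "m \<le> card (nB c)" by simp
  define S where "S = {a \<in> nB c. card (nB a) \<le> 3}"
  have "nB c = S \<union> {a \<in> nB c. 4 \<le> card (nB a)}" unfolding S_def by auto
  then have "card (nB c) \<le> card S + card {a \<in> nB c. 4 \<le> card (nB a)}"
    by (metis card_Un_le)
  then have S_big: "m - 1 \<le> card S" using few_heavy_blue_neighbours[OF c deg] deg by linarith
  have S_sub: "S \<subseteq> nB c" unfolding S_def by blast
  have dense: "4 \<le> card (nR a \<inter> S)" if a: "a \<in> S" for a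
  proof -
    have aN: "a < N" using a S_sub nbr_lt by blast
    have "c \<in> nB a" using a S_sub nbr_sym[OF _ c] by blast
    moreover have "S - {a} \<subseteq> {0..<N}" using S_sub nbr_subset by blast
    moreover have "c \<notin> S - {a}" using S_sub nbr_ne[of c N B c] by blast
    ultimately have "card (S - {a}) + 1 \<le> card (nR a \<inter> (S - {a})) + card (nB a)"
      using colour_split[OF colouring aN] by blast
    moreover have "card (S - {a}) + 1 = card S"
      using card_Suc_Diff1[OF finite_subset[OF S_sub finite_nbr] a] by simp
    moreover have "card (nR a \<inter> (S - {a})) \<le> card (nR a \<inter> S)" by (intro card_mono) auto
    moreover have "card (nB a) \<le> 3" using a unfolding S_def by blast
    ultimately show ?thesis using S_big m_ge by linarith
  qed
  have "length [] < card S" using S_big m_ge by simp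
  then obtain a1 where a1: "a1 \<in> S" by (rule obtain_fresh)
  have a1N: "a1 < N" using a1 S_sub nbr_lt by blast
  have "card (nB a1) \<le> 3" using a1 unfolding S_def by blast
  then have "m - 1 \<le> card (nR a1)" using degrees[OF a1N] m_ge by linarith
  moreover have "5 \<le> m" using m_ge by simp
  ultimately have "contains N R m (T1 m) \<and> contains N R m (T2 m) \<and> contains N R m (Tstar m)"
    using dense_set_trees[OF _ a1N _ a1 dense] by blast
  with no_red show False by blast
qed

text \<open>Otherwise all red degrees are at least m - 5 and c is the centre of all red trees.\<close>

lemma red_degree_le_m_minus_2:
  assumes c: "c < N"
  shows "card (nR c) \<le> m - 2"
proof (rule ccontr)
  assume "\<not> ?thesis"
  then have deg: "m - 1 \<le> card (nR c)" by simp
  have "4 \<le> card (nR v \<inter> {0..<N})" if "v \<in> {0..<N}" for v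
  proof -
    have "v < N" using that by simp
    then have "m - 5 \<le> card (nR v)"
      using degrees blue_degree_le_m_minus_1 m_ge by fastforce
    moreover have "nR v \<inter> {0..<N} = nR v" using nbr_subset by blast
    ultimately show ?thesis using m_ge by simp
  qed
  moreover have "5 \<le> m" "c \<in> {0..<N}" using m_ge c by simp_all
  ultimately have "contains N R m (T1 m) \<and> contains N R m (T2 m) \<and> contains N R m (Tstar m)"
    using dense_set_trees[OF _ c deg] by blast
  with no_red show False by blast
qed

text \<open>Otherwise c has a red neighbour w sharing a blue neighbour a with c, and w serves as the
  pendant vertex outside the blue neighbourhood of c.\<close>

lemma blue_degree_le_m_minus_2:
  assumes c: "c < N"
  shows "card (nB c) \<le> m - 2"
proof (rule ccontr)
  assume "\<not> ?thesis"
  then have deg: "m - 1 \<le> card (nB c)" by simp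
  have red_c: "card (nR c) = m - 5"
    using degrees[OF c] blue_degree_le_m_minus_1[OF c] deg m_ge by linarith
  have heavy: "m - 4 \<le> card (nB v)" if "v < N" for v
    using degrees[OF that] red_degree_le_m_minus_2[OF that] m_ge by linarith
  have "length [] < card (nR c)" using red_c m_ge by simp
  then obtain w where w: "w \<in> nR c" by (rule obtain_fresh)
  have "card (nR c) \<le> card (nB w)" using red_c heavy[OF nbr_lt[OF w]] by linarith
  then obtain a where a: "a \<in> nB w" "a \<in> nB c"
    using common_opposite_neighbour[OF colouring c w] by blast
  have "w \<in> nB a" using nbr_sym[OF a(1) nbr_lt[OF w]] .
  moreover have "w \<noteq> c" "w \<notin> nB c" using w nbr_ne red_not_blue[OF c] by blast+
  moreover have "5 \<le> m + 1" "m + 1 - 2 \<le> card (nB c)" using m_ge deg by simp_all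
  moreover have "4 \<le> card (nB v)" if "v < N" for v using heavy[OF that] m_ge by simp
  ultimately have "contains N B (m + 1) (T1 (m + 1)) \<and> contains N B (m + 1) (T2 (m + 1))"
    using trees_with_outside_vertex[OF _ c _ a(2)] by blast
  with no_blue show False by blast
qed

text \<open>The same argument with the colours exchanged.\<close>

lemma red_degree_le_m_minus_3:
  assumes c: "c < N"
  shows "card (nR c) \<le> m - 3"
proof (rule ccontr)
  assume "\<not> ?thesis"
  then have deg: "m - 2 \<le> card (nR c)" by simp
  have blue_c: "card (nB c) = m - 4"
    using degrees[OF c] red_degree_le_m_minus_2[OF c] deg m_ge by linarith
  have heavy: "m - 4 \<le> card (nR v)" if "v < N" for v
    using degrees[OF that] blue_degree_le_m_minus_2[OF that] m_ge by linarith
  have "length [] < card (nB c)" using blue_c m_ge by simp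
  then obtain w where w: "w \<in> nB c" by (rule obtain_fresh)
  have "card (nB c) \<le> card (nR w)" using blue_c heavy[OF nbr_lt[OF w]] by linarith
  then obtain a where a: "a \<in> nR w" "a \<in> nR c"
    using common_opposite_neighbour[OF colouring' c w] by blast
  have "w \<in> nR a" using nbr_sym[OF a(1) nbr_lt[OF w]] .
  moreover have "w \<noteq> c" "w \<notin> nR c" using w nbr_ne blue_not_red[OF c] by blast+
  moreover have "5 \<le> m" "m - 2 \<le> card (nR c)" using m_ge deg by simp_all
  moreover have "4 \<le> card (nR v)" if "v < N" for v using heavy[OF that] m_ge by simp
  ultimately have "contains N R m (T1 m) \<and> contains N R m (T2 m) \<and> contains N R m (Tstar m)"
    using trees_with_outside_vertex[OF _ c _ a(2)] by blast
  with no_red show False by blast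
qed

lemma blue_neighbours_of_red_neighbour:
  assumes c: "c < N" and blue_c: "card (nB c) = m - 2" and w: "w \<in> nR c"
  shows "2 \<le> card (nB w \<inter> nB c)"
proof -
  have wN: "w < N" using w nbr_lt by blast
  have "c \<in> nR w" using nbr_sym[OF w c] .
  moreover have "nB c \<subseteq> {0..<N}" "w \<notin> nB c" "c \<notin> nB c"
    using nbr_subset red_not_blue[OF c w] nbr_ne[of c N B c] by blast+
  ultimately have "card (nB c) + 1 \<le> card (nB w \<inter> nB c) + card (nR w)"
    using colour_split[OF colouring' wN] by blast
  then show ?thesis using blue_c red_degree_le_m_minus_3[OF wN] m_ge by linarith
qed

text \<open>By the pigeonhole principle some blue neighbour a of c has two blue neighbours among the red
  neighbours of c; these are pendant vertices outside the blue neighbourhood.\<close>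

lemma blue_T2_at_deficient_vertex:
  assumes c: "c < N" and blue_c: "card (nB c) = m - 2"
  shows "contains N B (m + 1) (T2 (m + 1))"
proof -
  have red_c: "card (nR c) = m - 4" using degrees[OF c] blue_c m_ge by linarith
  have "\<exists>a\<in>nB c. 2 \<le> card {w \<in> nR c. a \<in> nB w}"
  proof (rule pigeonhole_two[OF finite_nbr finite_nbr])
    show "2 \<le> card {a \<in> nB c. a \<in> nB w}" if "w \<in> nR c" for w
      using blue_neighbours_of_red_neighbour[OF c blue_c that] by (simp add: Int_def conj_commute)
    show "card (nB c) < 2 * card (nR c)" using blue_c red_c m_ge by simp
  qed
  then obtain a where a: "a \<in> nB c" and two: "2 \<le> card {w \<in> nR c. a \<in> nB w}" by blast
  obtain x where x: "x \<in> nR c" "a \<in> nB x"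
    using obtain_fresh[of "[]" "{w \<in> nR c. a \<in> nB w}"] two by auto
  obtain y where y: "y \<in> nR c" "a \<in> nB y" "y \<noteq> x"
    using obtain_fresh[of "[x]" "{w \<in> nR c. a \<in> nB w}"] two by auto
  have "x \<in> nB a" "y \<in> nB a" using x y nbr_sym nbr_lt by blast+
  moreover have "x \<noteq> c" "y \<noteq> c" using x y nbr_ne by blast+
  moreover have "card ({x, y} - nB c) = 2"
    using card_outside_pair red_not_blue[OF c] x(1) y(1,3) by metis
  moreover have "5 \<le> m + 1" using m_ge by simp
  ultimately show ?thesis
    using T2_embedding[OF _ c a] blue_c y(3)[symmetric] m_ge by simp
qed

text \<open>Two red neighbours of c with distinct blue partners in the blue neighbourhood give T_{m+1}^1.\<close>

lemma blue_T1_at_deficient_vertex: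
  assumes c: "c < N" and blue_c: "card (nB c) = m - 2"
  shows "contains N B (m + 1) (T1 (m + 1))"
proof -
  have red_c: "card (nR c) = m - 4" using degrees[OF c] blue_c m_ge by linarith
  have "length [] < card (nR c)" using red_c m_ge by simp
  then obtain w1 where w1: "w1 \<in> nR c" by (rule obtain_fresh)
  have "length [w1] < card (nR c)" using red_c m_ge by simp
  then obtain w2 where w2: "w2 \<in> nR c" "w2 \<noteq> w1" by (rule obtain_fresh) auto
  have "length [] < card (nB w2 \<inter> nB c)"
    using blue_neighbours_of_red_neighbour[OF c blue_c w2(1)] by simp
  then obtain b where b: "b \<in> nB w2" "b \<in> nB c" by (rule obtain_fresh) auto
  have "length [b] < card (nB w1 \<inter> nB c)"
    using blue_neighbours_of_red_neighbour[OF c blue_c w1] by simp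
  then obtain a where a: "a \<in> nB w1" "a \<in> nB c" "a \<noteq> b" by (rule obtain_fresh) auto
  have "w1 \<in> nB a" "w2 \<in> nB b" using a b w1 w2 nbr_sym nbr_lt by blast+
  moreover have "w1 \<notin> nB c" "w2 \<notin> nB c" using w1 w2 red_not_blue[OF c] by blast+
  moreover have "w1 \<noteq> c" "w2 \<noteq> c" using w1 w2 nbr_ne by blast+
  moreover have "card ({w1, w2} - nB c) = 2"
    using card_outside_pair \<open>w1 \<notin> nB c\<close> \<open>w2 \<notin> nB c\<close> w2(2) by metis
  moreover have "w1 \<noteq> b" "w2 \<noteq> a" using a(2) b(2) \<open>w1 \<notin> nB c\<close> \<open>w2 \<notin> nB c\<close> by blast+
  moreover have "5 \<le> m + 1" using m_ge by simp
  ultimately show ?thesis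
    using T1_embedding[OF _ c a(2) b(2)] blue_c a(3) w2(2) m_ge by simp
qed

lemma blue_degree_le_m_minus_3:
  assumes c: "c < N"
  shows "card (nB c) \<le> m - 3"
proof (rule ccontr)
  assume "\<not> ?thesis"
  then have "card (nB c) = m - 2" using blue_degree_le_m_minus_2[OF c] by simp
  then show False
    using blue_T1_at_deficient_vertex[OF c] blue_T2_at_deficient_vertex[OF c] no_blue by blast
qed

lemma regular:
  assumes "v < N"
  shows "card (nR v) = m - 3" and "card (nB v) = m - 3"
  using degrees[OF assms] red_degree_le_m_minus_3[OF assms] blue_degree_le_m_minus_3[OF assms] m_ge
  by linarith+

lemma red_partner:
  assumes c: "c < N" and w: "w \<in> nB c"
  obtains a where "a \<in> nR w" "a \<in> nR c"
proof (rule common_opposite_neighbour[OF colouring' c w])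
  show "card (nB c) \<le> card (nR w)" using regular c nbr_lt[OF w] by simp
qed

lemma blue_partner:
  assumes c: "c < N" and a: "a \<in> nR c"
  obtains w where "w \<in> nB a" "w \<in> nB c"
proof (rule common_opposite_neighbour[OF colouring c a])
  show "card (nR c) \<le> card (nB a)" using regular c nbr_lt[OF a] by simp
qed

text \<open>The final step: all three red trees exist.  T_m^1 uses two red neighbours of c with red
  neighbours in N_B(c), which lie outside N_R(c).\<close>

lemma red_T1:
  assumes c: "c < N"
  shows "contains N R m (T1 m)"
proof -
  have "length [] < card (nB c)" using regular(2)[OF c] m_ge by simp
  then obtain w1 where w1: "w1 \<in> nB c" by (rule obtain_fresh)
  obtain a1 where a1: "a1 \<in> nR w1" "a1 \<in> nR c" using red_partner[OF c w1] .
  obtain w2 where w2: "w2 \<in> nB a1" "w2 \<in> nB c" using blue_partner[OF c a1(2)] .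
  obtain a2 where a2: "a2 \<in> nR w2" "a2 \<in> nR c" using red_partner[OF c w2(2)] .
  have x: "w1 \<in> nR a1" and y: "w2 \<in> nR a2" using a1 a2 w1 w2 nbr_sym nbr_lt by blast+
  have "w2 \<notin> nR a1" using blue_not_red[OF nbr_lt[OF a1(2)] w2(1)] .
  then have "a1 \<noteq> a2" "w2 \<noteq> w1" using x y by blast+
  moreover have "w1 \<notin> nR c" "w2 \<notin> nR c" using w1 w2 blue_not_red[OF c] by blast+
  moreover have "w1 \<noteq> c" "w2 \<noteq> c" using w1 w2 nbr_ne by blast+
  moreover have "w1 \<noteq> a2" "w2 \<noteq> a1" using a1(2) a2(2) \<open>w1 \<notin> nR c\<close> \<open>w2 \<notin> nR c\<close> by blast+
  moreover have "card ({w1, w2} - nR c) = 2"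
    using card_outside_pair \<open>w1 \<notin> nR c\<close> \<open>w2 \<notin> nR c\<close> \<open>w2 \<noteq> w1\<close> by metis
  moreover have "5 \<le> m" using m_ge by simp
  ultimately show ?thesis
    using T1_embedding[OF _ c a1(2) a2(2) x y] regular(1)[OF c] m_ge by simp
qed

text \<open>There is a red edge inside N_B(c): otherwise every blue neighbour of c would have exactly the
  red neighbourhood of c, and a red neighbour of c would have red degree at least m - 2.\<close>

lemma red_edge_in_blue_neighbourhood:
  assumes c: "c < N"
  shows "\<exists>w\<in>nB c. \<exists>y\<in>nB c. y \<in> nR w"
proof (rule ccontr)
  assume "\<not> ?thesis"
  then have no_edge: "y \<notin> nR w" if "w \<in> nB c" "y \<in> nB c" for w y using that by blast
  have same: "nR w = nR c" if w: "w \<in> nB c" for w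
  proof (rule card_subset_eq)
    have wN: "w < N" using w nbr_lt by blast
    show "nR w \<subseteq> nR c"
    proof
      fix u assume u: "u \<in> nR w"
      have "u \<noteq> c" using u blue_not_red[OF wN] nbr_sym[OF w c] by blast
      moreover have "u \<notin> nB c" using no_edge[OF w] u by blast
      ultimately show "u \<in> nR c" using colouring' c nbr_lt[OF u] unfolding complementary_def by blast
    qed
    show "card (nR w) = card (nR c)" using regular(1) wN c by simp
  qed simp
  have "length [] < card (nR c)" using regular(1)[OF c] m_ge by simp
  then obtain a where a: "a \<in> nR c" by (rule obtain_fresh)
  have "insert c (nB c) \<subseteq> nR a"
  proof
    fix v assume "v \<in> insert c (nB c)"
    then show "v \<in> nR a"
    proof
      assume "v = c" then show ?thesis using nbr_sym[OF a c] by simp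
    next
      assume v: "v \<in> nB c"
      then have "a \<in> nR v" using same a by blast
      then show ?thesis using nbr_sym nbr_lt[OF v] by blast
    qed
  qed
  then have "card (insert c (nB c)) \<le> card (nR a)" by (intro card_mono) simp_all
  moreover have "c \<notin> nB c" using nbr_ne by blast
  ultimately show False using regular[OF c] regular(1)[OF nbr_lt[OF a]] m_ge by simp
qed

text \<open>A red path c - a - w - y with w, y in N_B(c) gives T_m^*.\<close>

lemma red_Tstar:
  assumes c: "c < N"
  shows "contains N R m (Tstar m)"
proof -
  obtain w y where w: "w \<in> nB c" and y: "y \<in> nB c" "y \<in> nR w"
    using red_edge_in_blue_neighbourhood[OF c] by blast
  obtain a where a: "a \<in> nR w" "a \<in> nR c" using red_partner[OF c w] .
  have x: "w \<in> nR a" using nbr_sym[OF a(1) nbr_lt[OF w]] .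
  have "w \<notin> nR c" "y \<notin> nR c" using w y blue_not_red[OF c] by blast+
  moreover have "w \<noteq> c" "y \<noteq> c" "y \<noteq> w" using w y nbr_ne by blast+
  moreover have "y \<noteq> a" using a(2) \<open>y \<notin> nR c\<close> by blast
  moreover have "card ({w, y} - nR c) = 2"
    using card_outside_pair \<open>w \<notin> nR c\<close> \<open>y \<notin> nR c\<close> \<open>y \<noteq> w\<close> by metis
  moreover have "5 \<le> m" using m_ge by simp
  ultimately show ?thesis
    using Tstar_embedding[OF _ c a(2) x y(2)] regular(1)[OF c] m_ge by simp
qed

lemma red_T2_at_vertex:
  assumes c: "c < N" and a: "a \<in> nR c" and x: "x \<in> nR a" "x \<in> nB c"
    and y: "y \<in> nR a" "y \<in> nB c" and "x \<noteq> y"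
  shows "contains N R m (T2 m)"
proof -
  have "x \<notin> nR c" "y \<notin> nR c" using x y blue_not_red[OF c] by blast+
  moreover have "x \<noteq> c" "y \<noteq> c" using x y nbr_ne by blast+
  moreover have "card ({x, y} - nR c) = 2"
    using card_outside_pair \<open>x \<notin> nR c\<close> \<open>y \<notin> nR c\<close> \<open>x \<noteq> y\<close> by metis
  moreover have "5 \<le> m" using m_ge by simp
  ultimately show ?thesis
    using T2_embedding[OF _ c a x(1) y(1)] regular(1)[OF c] \<open>x \<noteq> y\<close> m_ge by simp
qed

text \<open>Otherwise the red edges between N_R(c) and N_B(c) form a perfect matching, and a blue
  neighbour w of c is the centre of a T_m^2 whose pendant vertices c, y lie outside N_R(w).\<close>

lemma red_T2_at_blue_neighbour:
  assumes c: "c < N"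
    and unique_blue: "\<And>a w w'. a \<in> nR c \<Longrightarrow> w \<in> nB c \<Longrightarrow> w' \<in> nB c \<Longrightarrow>
                                w \<in> nR a \<Longrightarrow> w' \<in> nR a \<Longrightarrow> w = w'"
  shows "contains N R m (T2 m)"
proof -
  have unique_red: "a = a'"
    if "w \<in> nB c" "a \<in> nR c" "a' \<in> nR c" "w \<in> nR a" "w \<in> nR a'" for w a a'
  proof (rule unique_partner_converse[where R = "\<lambda>a w. w \<in> nR a", OF finite_nbr _ _ _ that])
    show "card (nR c) \<le> card (nB c)" using regular[OF c] by simp
    show "\<exists>a\<in>nR c. w \<in> nR a" if "w \<in> nB c" for w
      using red_partner[OF c that] nbr_sym nbr_lt[OF that] by metis
  qed (use unique_blue in blast)
  have "length [] < card (nB c)" using regular(2)[OF c] m_ge by simp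
  then obtain w where w: "w \<in> nB c" by (rule obtain_fresh)
  have wN: "w < N" using w nbr_lt by blast
  obtain a where a: "a \<in> nR w" "a \<in> nR c" using red_partner[OF c w] .
  have aN: "a < N" using a nbr_lt by blast
  have "length [c, w] < card (nR a)" using regular(1)[OF aN] m_ge by simp
  then obtain y where y: "y \<in> nR a" "y \<notin> set [c, w]" by (rule obtain_fresh)
  have "w \<in> nR a" "c \<in> nR a" using nbr_sym a wN c by blast+
  have "y \<notin> nB c" using unique_blue[OF a(2) _ w y(1) \<open>w \<in> nR a\<close>] y(2) by auto
  then have "y \<in> nR c" using colouring' c nbr_lt[OF y(1)] y(2) unfolding complementary_def by auto
  have "y \<notin> nR w"
  proof
    assume "y \<in> nR w"
    then have "w \<in> nR y" using nbr_sym wN by blast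
    then have "y = a" using unique_red[OF w \<open>y \<in> nR c\<close> a(2) _ \<open>w \<in> nR a\<close>] by blast
    then show False using y(1) nbr_ne by blast
  qed
  moreover have "c \<notin> nR w" using blue_not_red[OF wN] nbr_sym[OF w c] by blast
  moreover have "card ({c, y} - nR w) = 2"
    using card_outside_pair \<open>c \<notin> nR w\<close> \<open>y \<notin> nR w\<close> y(2) by (metis list.set_intros(1))
  moreover have "5 \<le> m" "c \<noteq> w" using m_ge w nbr_ne by auto
  ultimately show ?thesis
    using T2_embedding[OF _ wN a(1) \<open>c \<in> nR a\<close> y(1)] regular(1)[OF wN] y(2) m_ge by auto
qed

lemma red_T2:
  assumes c: "c < N"
  shows "contains N R m (T2 m)"
proof (cases "\<exists>a\<in>nR c. \<exists>x y. x \<in> nR a \<and> x \<in> nB c \<and> y \<in> nR a \<and> y \<in> nB c \<and> x \<noteq> y")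
  case True
  then show ?thesis using red_T2_at_vertex[OF c] by blast
next
  case False
  then show ?thesis using red_T2_at_blue_neighbour[OF c] by blast
qed

theorem no_tree_free_colouring: False
proof -
  have "0 < N" using N_eq m_ge by simp
  then show False using red_T1 red_T2 red_Tstar no_red by blast
qed

end

lemma tree_in_colouring:
  assumes "12 \<le> m"
  shows "(contains (2 * m - 5) E m (T1 m) \<and> contains (2 * m - 5) E m (T2 m)
            \<and> contains (2 * m - 5) E m (Tstar m))
       \<or> (contains (2 * m - 5) (compl_graph (2 * m - 5) E) (m + 1) (T1 (m + 1))
            \<and> contains (2 * m - 5) (compl_graph (2 * m - 5) E) (m + 1) (T2 (m + 1)))"
proof (rule ccontr)
  assume "\<not> ?thesis"
  then interpret tree_free_colouring m "2 * m - 5" E "compl_graph (2 * m - 5) E"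
    using assms complementary_compl_graph by unfold_locales auto
  show False by (rule no_tree_free_colouring)
qed

lemma ramsey_trees:
  assumes m: "12 \<le> m" and H1: "H1 \<in> {T1 m, T2 m, Tstar m}" and H2: "H2 \<in> {T1 (m + 1), T2 (m + 1)}"
  shows "ramsey m H1 (m + 1) H2 = 2 * m - 5"
  unfolding ramsey_def
proof (rule Least_equality)
  show "1 \<le> 2 * m - 5 \<and> (\<forall>E. is_graph (2 * m - 5) E \<longrightarrow> contains (2 * m - 5) E m H1
          \<or> contains (2 * m - 5) (compl_graph (2 * m - 5) E) (m + 1) H2)"
    using tree_in_colouring[OF m] H1 H2 m by auto
next
  fix N assume N: "1 \<le> N \<and> (\<forall>E. is_graph N E \<longrightarrow> contains N E m H1
                                 \<or> contains N (compl_graph N E) (m + 1) H2)"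
  show "2 * m - 5 \<le> N"
  proof (rule ccontr)
    assume "\<not> ?thesis"
    then have small: "N \<le> 2 * (m - 3)" by simp
    define E where "E = two_cliques N (m - 3)"
    have "is_graph N E" unfolding E_def two_cliques_def is_graph_def by blast
    then have "contains N E m H1 \<or> contains N (compl_graph N E) (m + 1) H2" using N by blast
    then show False
    proof
      assume red: "contains N E m H1"
      have star: "{0, k} \<in> H1" if "1 \<le> k" "k \<le> m - 3" for k
        using star_edges_in_trees[OF that] H1 by blast
      have "m - 3 < m" using m by simp
      then obtain v where "v < N" "m - 3 \<le> card (nbr N E v)"
        using centre_degree[OF red _ star] by blast
      then show False using two_cliques_degrees(1)[OF small] unfolding E_def by fastforce
    next
      assume blue: "contains N (compl_graph N E) (m + 1) H2"
      have star: "{0, k} \<in> H2" if "1 \<le> k" "k \<le> m - 2" for k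
        using star_edges_in_trees[of k "m + 1"] that H2 by auto
      have "m - 2 < m + 1" by simp
      then obtain v where "v < N" "m - 2 \<le> card (nbr N (compl_graph N E) v)"
        using centre_degree[OF blue _ star] by blast
      then show False using two_cliques_degrees(2)[OF small] m unfolding E_def by fastforce
    qed
  qed
qed

theorem theorem6p5:
  fixes m i j :: nat
  assumes "m \<ge> 12" and "i \<in> {1, 2}" and "j \<in> {1, 2}"
  shows "ramsey m (Ti i m) (m + 1) (Ti j (m + 1)) = 2 * m - 5
       \<and> ramsey m (Tstar m) (m + 1) (Ti j (m + 1)) = 2 * m - 5"
proof -
  have "Ti i m \<in> {T1 m, T2 m, Tstar m}" "Tstar m \<in> {T1 m, T2 m, Tstar m}"
    and "Ti j (m + 1) \<in> {T1 (m + 1), T2 (m + 1)}"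
    using assms by (auto simp: Ti_def)
  then show ?thesis using ramsey_trees[OF assms(1)] by blast
qed

end
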